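(* Let $\{\mathcal{T}_n\}_{n\ge K}$ be a $K$-type CMRT with type probabilities $p_1,\dots,p_K$ and attachment probabilities $(q_{ij})$, and for $k\ge0$ let $N_k(n)$ be the number of vertices of out-degree $k$ in $\mathcal{T}_n$. Then for each fixed $k$, $N_k(n)/n\to c_k$ in probability as $n\to\infty$, where $$c_k=\sum_{i=1}^K\frac{p_i}{1+r_i}\left(\frac{r_i}{1+r_i}\right)^k,\qquad r_i=\frac{1}{p_i}\sum_{j=1}^K p_jq_{ji},$$ and when $p_i=0$ the $i$-th term of $c_k$ is interpreted as $0$.
   Context: $K$-type Community Modulated Recursive Tree (CMRT): fix $K\ge 2$, a probability vector $(p_1,\dots,p_K)$ with $p_1=\max_i p_i>0$, and numbers $q_{ij}\ge 0$ with $\sum_{j=1}^K q_{ij}=1$ for each $i$. $\mathcal{T}_K$ is a uniform random recursive tree on vertices $\{1,\dots,K\}$ (a tree chosen uniformly among trees on these labels rooted at $1$ in which labels increase along paths from $1$), whose vertices are assigned the types $1,\dots,K$ via a uniform random permutation, so there is exactly one vertex of each type (the root of that type). For $n>K$, $\mathcal{T}_n$ is obtained from $\mathcal{T}_{n-1}$ by adding vertex $n$: (1) vertex $n$ is assigned type $i$ with probability $p_i$; (2) given its type $i$, it chooses to connect to type $j$ with probability $q_{ij}$; (3) it connects by an edge to an existing vertex of type $j$ chosen uniformly at random. All random choices are independent. Edges are directed from parent (earlier vertex) to child; the out-degree of a vertex is its number of children. *)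

theory Defs
  imports "HOL-Probability.Probability" "HOL-Combinatorics.Permutations"
begin

text \<open>A state of the CMRT with n vertices (labelled 1..n) is a pair (typ, par):
  typ v is the type (in 1..K) of vertex v, par v is the parent of vertex v
  (par 1 = 0 for the root 1; both functions are 0 outside the vertex set).\<close>

type_synonym cmrt_state = "(nat \<Rightarrow> nat) \<times> (nat \<Rightarrow> nat)"

definition recursive_trees :: "nat \<Rightarrow> (nat \<Rightarrow> nat) set" where
  "recursive_trees K = {f. (\<forall>m\<in>{2..K}. f m \<in> {1..<m}) \<and> (\<forall>m. m \<notin> {2..K} \<longrightarrow> f m = 0)}"

definition cmrt_init :: "nat \<Rightarrow> cmrt_state pmf" where
  "cmrt_init K =
     do { \<sigma> \<leftarrow> pmf_of_set {\<sigma>. \<sigma> permutes {1..K}};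
          f \<leftarrow> pmf_of_set (recursive_trees K);
          return_pmf (\<lambda>v. if v \<in> {1..K} then \<sigma> v else 0, f) }"

definition vec_pmf :: "nat \<Rightarrow> (nat \<Rightarrow> real) \<Rightarrow> nat pmf" where
  "vec_pmf K w = embed_pmf (\<lambda>i. if i \<in> {1..K} then w i else 0)"

definition cmrt_step :: "(nat \<Rightarrow> real) \<Rightarrow> (nat \<Rightarrow> nat \<Rightarrow> real) \<Rightarrow> nat \<Rightarrow> nat \<Rightarrow> cmrt_state \<Rightarrow> cmrt_state pmf" where
  "cmrt_step p q K n s =
     do { i \<leftarrow> vec_pmf K p;
          j \<leftarrow> vec_pmf K (q i);
          v \<leftarrow> pmf_of_set {v \<in> {1..n}. fst s v = j};
          return_pmf ((fst s)(Suc n := i), (snd s)(Suc n := v)) }"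

text \<open>Law of T_n (meaningful for n \<ge> K; for n \<le> K it is the law of T_K).\<close>
fun cmrt :: "(nat \<Rightarrow> real) \<Rightarrow> (nat \<Rightarrow> nat \<Rightarrow> real) \<Rightarrow> nat \<Rightarrow> nat \<Rightarrow> cmrt_state pmf" where
  "cmrt p q K 0 = cmrt_init K"
| "cmrt p q K (Suc m) =
     (if Suc m \<le> K then cmrt_init K else bind_pmf (cmrt p q K m) (cmrt_step p q K m))"

definition out_degree :: "nat \<Rightarrow> cmrt_state \<Rightarrow> nat \<Rightarrow> nat" where
  "out_degree n s v = card {w \<in> {1..n}. snd s w = v}"

definition N_deg :: "nat \<Rightarrow> nat \<Rightarrow> cmrt_state \<Rightarrow> nat" where
  "N_deg k n s = card {v \<in> {1..n}. out_degree n s v = k}"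

definition cmrt_r :: "(nat \<Rightarrow> real) \<Rightarrow> (nat \<Rightarrow> nat \<Rightarrow> real) \<Rightarrow> nat \<Rightarrow> nat \<Rightarrow> real" where
  "cmrt_r p q K i = (\<Sum>j=1..K. p j * q j i) / p i"

definition cmrt_c :: "(nat \<Rightarrow> real) \<Rightarrow> (nat \<Rightarrow> nat \<Rightarrow> real) \<Rightarrow> nat \<Rightarrow> nat \<Rightarrow> real" where
  "cmrt_c p q K k = (\<Sum>i=1..K. if p i = 0 then 0 else
      p i / (1 + cmrt_r p q K i) * (cmrt_r p q K i / (1 + cmrt_r p q K i)) ^ k)"

end

theory Submission
  imports Defs
begin

text \<open>
  Let \<open>M\<^sub>j(n)\<close> be the number of type-\<open>j\<close> vertices of \<open>T\<^sub>n\<close> and \<open>N\<^sub>k\<^sub>,\<^sub>j(n)\<close> the number of those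
  with out-degree \<open>k\<close>. A new vertex has type \<open>j\<close> with probability \<open>p\<^sub>j\<close>, and a type-\<open>j\<close> vertex
  receives it as a child with probability \<open>a\<^sub>j / M\<^sub>j\<close>, where \<open>a\<^sub>j = \<Sum>\<^sub>i p\<^sub>i q\<^sub>i\<^sub>j = r\<^sub>j p\<^sub>j\<close>.
  Hence \<open>M\<^sub>j - p\<^sub>j n\<close> has zero drift, and for the geometric weights
  \<open>\<gamma>\<^sub>k = 1/(1+r\<^sub>j) (r\<^sub>j/(1+r\<^sub>j))\<^sup>k\<close>, which solve the balance equations
  \<open>(\<delta>\<^sub>k\<^sub>0 - \<gamma>\<^sub>k) p\<^sub>j = a\<^sub>j (\<gamma>\<^sub>k - \<gamma>\<^sub>k\<^sub>-\<^sub>1)\<close>, the discrepancy \<open>Z\<^sub>k = N\<^sub>k\<^sub>,\<^sub>j - \<gamma>\<^sub>k M\<^sub>j\<close> has drift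
  \<open>a\<^sub>j (Z\<^sub>k\<^sub>-\<^sub>1 - Z\<^sub>k) / M\<^sub>j\<close>. As \<open>|Z\<^sub>k| \<le> (1 + \<gamma>\<^sub>k) M\<^sub>j\<close> and the increments are bounded,
  \<open>E Z\<^sub>k(n+1)\<^sup>2 \<le> E Z\<^sub>k(n)\<^sup>2 + O(E |Z\<^sub>k\<^sub>-\<^sub>1(n)|) + O(1)\<close>, so by induction on \<open>k\<close> all these
  quantities are \<open>o(n)\<close> in mean. Types with \<open>p\<^sub>j = 0\<close> keep a single vertex. Summing over
  the types gives \<open>E |N\<^sub>k(n)/n - c\<^sub>k| \<rightarrow> 0\<close>, and Markov's inequality concludes.
\<close>

section \<open>Finitely supported distributions\<close>

definition prob_vector :: "nat \<Rightarrow> (nat \<Rightarrow> real) \<Rightarrow> bool" where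
  "prob_vector K w \<longleftrightarrow> (\<forall>i\<in>{1..K}. 0 \<le> w i) \<and> (\<Sum>i=1..K. w i) = 1"

lemma pmf_vec_pmf:
  assumes "prob_vector K w"
  shows "pmf (vec_pmf K w) i = (if i \<in> {1..K} then w i else 0)"
proof -
  have nonneg: "\<forall>i\<in>{1..K}. 0 \<le> w i" and sum: "(\<Sum>i=1..K. w i) = 1"
    using assms unfolding prob_vector_def by auto
  have "(\<integral>\<^sup>+i. ennreal (if i \<in> {1..K} then w i else 0) \<partial>count_space UNIV)
        = (\<Sum>i\<in>{1..K}. ennreal (if i \<in> {1..K} then w i else 0))"
    by (rule nn_integral_count_space') auto
  also have "\<dots> = ennreal (\<Sum>i=1..K. w i)"
    using nonneg by (subst sum_ennreal[symmetric]) auto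
  also have "\<dots> = 1"
    using sum by simp
  finally show ?thesis
    unfolding vec_pmf_def using nonneg by (subst pmf_embed_pmf) auto
qed

lemma set_vec_pmf: "prob_vector K w \<Longrightarrow> set_pmf (vec_pmf K w) \<subseteq> {1..K}"
  by (auto simp: set_pmf_iff pmf_vec_pmf split: if_splits)

lemma expectation_vec_pmf_bind:
  fixes f :: "'a \<Rightarrow> real"
  assumes "prob_vector K w" and "\<And>i. i \<in> {1..K} \<Longrightarrow> finite (set_pmf (N i))"
  shows "measure_pmf.expectation (vec_pmf K w \<bind> N) f
           = (\<Sum>i=1..K. w i * measure_pmf.expectation (N i) f)"
  using assms set_vec_pmf[OF assms(1)]
  by (subst pmf_expectation_bind[of "{1..K}"]) (auto simp: pmf_vec_pmf intro: sum.cong)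

lemma expectation_pmf_of_set_bind_return:
  fixes f :: "'b \<Rightarrow> real"
  assumes "finite A" and "A \<noteq> {}"
  shows "measure_pmf.expectation (pmf_of_set A \<bind> (\<lambda>x. return_pmf (g x))) f
           = (\<Sum>x\<in>A. f (g x)) / card A"
  using pmf_expectation_bind[of A "\<lambda>x. return_pmf (g x)" "pmf_of_set A" f] assms
  by (simp add: sum_divide_distrib)

lemma expectation_bind_pmf:
  fixes f :: "'b \<Rightarrow> real"
  assumes "finite (set_pmf M)" and "\<And>x. x \<in> set_pmf M \<Longrightarrow> finite (set_pmf (N x))"
  shows "measure_pmf.expectation (M \<bind> N) f
           = measure_pmf.expectation M (\<lambda>x. measure_pmf.expectation (N x) f)"
  using pmf_expectation_bind[of "set_pmf M" N M f] assms
  by (simp add: integral_measure_pmf[of "set_pmf M"] mult.commute)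

lemma expectation_square_le:
  fixes f :: "'a \<Rightarrow> real"
  assumes "finite (set_pmf M)" and "\<And>x. x \<in> set_pmf M \<Longrightarrow> \<bar>f x - z\<bar> \<le> B"
  shows "measure_pmf.expectation M (\<lambda>x. (f x)\<^sup>2)
           \<le> z\<^sup>2 + 2 * z * (measure_pmf.expectation M f - z) + B\<^sup>2"
proof -
  note integrable = integrable_measure_pmf_finite[OF assms(1)]
  have "(f x - z)\<^sup>2 \<le> B\<^sup>2" if "x \<in> set_pmf M" for x
    using power_mono[OF assms(2)[OF that] abs_ge_zero, of 2] by simp
  then have "measure_pmf.expectation M (\<lambda>x. (f x - z)\<^sup>2) \<le> B\<^sup>2"
    using integrable by (intro measure_pmf.integral_le_const AE_pmfI) auto
  moreover have "(f x)\<^sup>2 = z\<^sup>2 + 2 * z * (f x - z) + (f x - z)\<^sup>2" for x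
    by (simp add: power2_eq_square algebra_simps)
  then have "measure_pmf.expectation M (\<lambda>x. (f x)\<^sup>2)
      = z\<^sup>2 + 2 * z * (measure_pmf.expectation M f - z) + measure_pmf.expectation M (\<lambda>x. (f x - z)\<^sup>2)"
    by (simp add: integrable Bochner_Integration.integral_add Bochner_Integration.integral_diff)
  ultimately show ?thesis
    by simp
qed

lemma square_expectation_abs_le:
  fixes f :: "'a \<Rightarrow> real"
  assumes "finite (set_pmf M)"
  shows "(measure_pmf.expectation M (\<lambda>x. \<bar>f x\<bar>))\<^sup>2 \<le> measure_pmf.expectation M (\<lambda>x. (f x)\<^sup>2)"
  using measure_pmf.variance_eq[of M "\<lambda>x. \<bar>f x\<bar>"] measure_pmf.variance_positive[of M "\<lambda>x. \<bar>f x\<bar>"]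
  by (simp add: integrable_measure_pmf_finite[OF assms])

lemma prob_abs_gt_tendsto_zero:
  fixes X :: "nat \<Rightarrow> 'a \<Rightarrow> real"
  assumes "\<And>n. integrable (measure_pmf (M n)) (X n)"
    and "(\<lambda>n. measure_pmf.expectation (M n) (\<lambda>x. \<bar>X n x\<bar>)) \<longlonglongrightarrow> 0" and "0 < \<epsilon>"
  shows "(\<lambda>n. measure_pmf.prob (M n) {x. \<epsilon> < \<bar>X n x\<bar>}) \<longlonglongrightarrow> 0"
proof (rule tendsto_sandwich[OF _ _ tendsto_const])
  have "measure_pmf.prob (M n) {x. \<epsilon> < \<bar>X n x\<bar>} \<le> measure_pmf.prob (M n) {x. \<epsilon> \<le> \<bar>X n x\<bar>}" for n
    by (intro measure_pmf.finite_measure_mono) auto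
  also have "measure_pmf.prob (M n) {x. \<epsilon> \<le> \<bar>X n x\<bar>}
               \<le> measure_pmf.expectation (M n) (\<lambda>x. \<bar>X n x\<bar>) / \<epsilon>" for n
    using integral_Markov_inequality_measure[of "M n" "\<lambda>x. \<bar>X n x\<bar>" UNIV \<epsilon>] assms(1,3) by simp
  finally show "\<forall>\<^sub>F n in sequentially. measure_pmf.prob (M n) {x. \<epsilon> < \<bar>X n x\<bar>}
                  \<le> measure_pmf.expectation (M n) (\<lambda>x. \<bar>X n x\<bar>) / \<epsilon>"
    by simp
  show "(\<lambda>n. measure_pmf.expectation (M n) (\<lambda>x. \<bar>X n x\<bar>) / \<epsilon>) \<longlonglongrightarrow> 0"
    using tendsto_divide_zero[OF assms(2)] by simp
qed simp

section \<open>A second-moment drift criterion\<close>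

lemma sublinear_increments_imp_subquadratic:
  fixes D e :: "nat \<Rightarrow> real"
  assumes incr: "\<And>n. N \<le> n \<Longrightarrow> D (Suc n) \<le> D n + e n"
    and e: "(\<lambda>n. e n / n) \<longlonglongrightarrow> 0" and nonneg: "\<And>n. 0 \<le> D n"
  shows "(\<lambda>n. D n / (real n)\<^sup>2) \<longlonglongrightarrow> 0"
proof (rule order_tendstoI)
  fix a :: real assume "a < 0"
  then show "\<forall>\<^sub>F n in sequentially. a < D n / (real n)\<^sup>2"
    using less_le_trans[OF \<open>a < 0\<close> divide_nonneg_nonneg[OF nonneg zero_le_power2]]
    by (intro always_eventually allI)
next
  fix r :: real assume r: "0 < r"
  obtain N1 where N1: "\<And>n. N1 \<le> n \<Longrightarrow> e n / n < r / 2"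
    using order_tendstoD(2)[OF e, of "r / 2"] r by (auto simp: eventually_sequentially)
  define N' where "N' = max N (max N1 1)"
  have bound: "D n \<le> D N' + r / 2 * (real n)\<^sup>2" if "N' \<le> n" for n
    using that
  proof (induction n rule: dec_induct)
    case base
    then show ?case using r by simp
  next
    case (step m)
    then have "e m \<le> r / 2 * m"
      using N1[of m] by (simp add: N'_def pos_divide_less_eq less_imp_le)
    have "D (Suc m) \<le> D m + e m"
      using incr step(1) by (simp add: N'_def)
    also have "\<dots> \<le> D N' + r / 2 * ((real m)\<^sup>2 + m)"
      using step.IH \<open>e m \<le> r / 2 * m\<close> by (simp add: distrib_left)
    also have "\<dots> \<le> D N' + r / 2 * (real (Suc m))\<^sup>2"
      using r by (intro add_left_mono mult_left_mono) (simp_all add: power2_eq_square algebra_simps)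
    finally show ?case .
  qed
  obtain N3 :: nat where N3: "2 * D N' / r < N3"
    using reals_Archimedean2 by blast
  have "D n / (real n)\<^sup>2 < r" if "max N' (max N3 1) \<le> n" for n
  proof -
    have "D N' < r / 2 * N3"
      using N3 r by (simp add: field_simps)
    also have "\<dots> \<le> r / 2 * (real n)\<^sup>2"
      using that r by (intro mult_left_mono) (auto simp: power2_eq_square intro: order_trans[of _ "real n"])
    finally have "D n < r * (real n)\<^sup>2"
      using bound[of n] that by simp
    then show ?thesis
      using that by (simp add: pos_divide_less_eq)
  qed
  then show "\<forall>\<^sub>F n in sequentially. D n / (real n)\<^sup>2 < r"
    unfolding eventually_sequentially by blast
qed

lemma relaxation_drift_le:
  fixes z w a c m :: real
  assumes "\<bar>z\<bar> \<le> c * m" and "0 < m" and "0 \<le> a"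
  shows "z * (a * (w - z) / m) \<le> a * c * \<bar>w\<bar>"
proof -
  have "z * (w - z) = z * w - z * z"
    by (simp add: algebra_simps)
  moreover have "z * w \<le> \<bar>z\<bar> * \<bar>w\<bar>"
    by (metis abs_ge_self abs_mult)
  ultimately have "z * (w - z) \<le> \<bar>z\<bar> * \<bar>w\<bar>"
    using zero_le_square[of z] by linarith
  then have "z * (a * (w - z) / m) \<le> a * (\<bar>z\<bar> * \<bar>w\<bar>) / m"
    using assms(2,3) by (simp add: divide_right_mono mult_left_mono mult.left_commute)
  also have "\<dots> \<le> a * (c * m * \<bar>w\<bar>) / m"
    using assms by (intro divide_right_mono mult_left_mono mult_right_mono) auto
  finally show ?thesis
    using assms(2) by simp
qed

lemma mean_abs_sublinear_of_drift:
  fixes M :: "nat \<Rightarrow> 'a pmf" and P :: "nat \<Rightarrow> 'a \<Rightarrow> 'a pmf" and Z h :: "nat \<Rightarrow> 'a \<Rightarrow> real"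
  assumes chain: "\<And>n. N \<le> n \<Longrightarrow> M (Suc n) = M n \<bind> P n"
    and finite: "\<And>n. finite (set_pmf (M n))"
    and increment: "\<And>n s x. N \<le> n \<Longrightarrow> s \<in> set_pmf (M n) \<Longrightarrow> x \<in> set_pmf (P n s) \<Longrightarrow>
                      \<bar>Z (Suc n) x - Z n s\<bar> \<le> B"
    and drift: "\<And>n s. N \<le> n \<Longrightarrow> s \<in> set_pmf (M n) \<Longrightarrow>
                  Z n s * (measure_pmf.expectation (P n s) (Z (Suc n)) - Z n s) \<le> h n s"
    and h: "(\<lambda>n. measure_pmf.expectation (M n) (h n) / n) \<longlonglongrightarrow> 0"
  shows "(\<lambda>n. measure_pmf.expectation (M n) (\<lambda>s. \<bar>Z n s\<bar>) / n) \<longlonglongrightarrow> 0"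
proof -
  define D where "D n = measure_pmf.expectation (M n) (\<lambda>s. (Z n s)\<^sup>2)" for n
  note integrable = integrable_measure_pmf_finite[OF finite]
  have finite_step: "finite (set_pmf (P n s))" if "N \<le> n" and "s \<in> set_pmf (M n)" for n s
    using finite[of "Suc n"] that by (auto simp: chain intro: finite_subset)
  have "D (Suc n) \<le> D n + (2 * measure_pmf.expectation (M n) (h n) + B\<^sup>2)" if n: "N \<le> n" for n
  proof -
    have "D (Suc n)
        = measure_pmf.expectation (M n) (\<lambda>s. measure_pmf.expectation (P n s) (\<lambda>x. (Z (Suc n) x)\<^sup>2))"
      unfolding D_def chain[OF n] using finite finite_step n by (intro expectation_bind_pmf) auto
    also have "\<dots> \<le> measure_pmf.expectation (M n) (\<lambda>s. (Z n s)\<^sup>2 + 2 * h n s + B\<^sup>2)"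
    proof (intro integral_mono_AE AE_pmfI integrable)
      fix s assume s: "s \<in> set_pmf (M n)"
      have "measure_pmf.expectation (P n s) (\<lambda>x. (Z (Suc n) x)\<^sup>2)
          \<le> (Z n s)\<^sup>2 + 2 * Z n s * (measure_pmf.expectation (P n s) (Z (Suc n)) - Z n s) + B\<^sup>2"
        using finite_step[OF n s] increment[OF n s] by (rule expectation_square_le)
      also have "\<dots> \<le> (Z n s)\<^sup>2 + 2 * h n s + B\<^sup>2"
        using drift[OF n s] by simp
      finally show "measure_pmf.expectation (P n s) (\<lambda>x. (Z (Suc n) x)\<^sup>2) \<le> (Z n s)\<^sup>2 + 2 * h n s + B\<^sup>2" .
    qed
    also have "\<dots> = D n + (2 * measure_pmf.expectation (M n) (h n) + B\<^sup>2)"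
      unfolding D_def by (simp add: integrable Bochner_Integration.integral_add)
    finally show ?thesis .
  qed
  moreover have "(\<lambda>n. (2 * measure_pmf.expectation (M n) (h n) + B\<^sup>2) / n) \<longlonglongrightarrow> 0"
    using tendsto_add[OF tendsto_mult_right_zero[OF h, of 2] lim_const_over_n[of "B\<^sup>2"]]
    by (simp add: add_divide_distrib)
  moreover have "0 \<le> D n" for n
    unfolding D_def by simp
  ultimately have "(\<lambda>n. D n / (real n)\<^sup>2) \<longlonglongrightarrow> 0"
    by (rule sublinear_increments_imp_subquadratic)
  then have sqrt_lim: "(\<lambda>n. sqrt (D n / (real n)\<^sup>2)) \<longlonglongrightarrow> 0"
    using tendsto_real_sqrt by fastforce
  have upper: "measure_pmf.expectation (M n) (\<lambda>s. \<bar>Z n s\<bar>) / n \<le> sqrt (D n / (real n)\<^sup>2)" for n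
  proof -
    have "measure_pmf.expectation (M n) (\<lambda>s. \<bar>Z n s\<bar>) \<le> sqrt (D n)"
      unfolding D_def using square_expectation_abs_le[OF finite] by (rule real_le_rsqrt)
    then show ?thesis
      by (simp add: real_sqrt_divide divide_right_mono)
  qed
  show ?thesis
    by (rule tendsto_sandwich[OF _ _ tendsto_const sqrt_lim]) (simp_all add: upper)
qed

section \<open>Type and degree counts of a tree state\<close>

definition vertices_of_type :: "nat \<Rightarrow> nat \<Rightarrow> cmrt_state \<Rightarrow> nat set" where
  "vertices_of_type j n s = {v \<in> {1..n}. fst s v = j}"

definition type_count :: "nat \<Rightarrow> nat \<Rightarrow> cmrt_state \<Rightarrow> nat" where
  "type_count j n s = card (vertices_of_type j n s)"

definition type_degree_count :: "nat \<Rightarrow> nat \<Rightarrow> nat \<Rightarrow> cmrt_state \<Rightarrow> nat" where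
  "type_degree_count k j n s = card {v \<in> vertices_of_type j n s. out_degree n s v = k}"

definition attach :: "nat \<Rightarrow> cmrt_state \<Rightarrow> nat \<Rightarrow> nat \<Rightarrow> cmrt_state" where
  "attach n s i v = ((fst s)(Suc n := i), (snd s)(Suc n := v))"

text \<open>Nonemptiness of every type class matters because \<^const>\<open>pmf_of_set\<close> of the empty set is junk.\<close>

definition wf_state :: "nat \<Rightarrow> nat \<Rightarrow> cmrt_state \<Rightarrow> bool" where
  "wf_state K n s \<longleftrightarrow> (\<forall>v\<in>{1..n}. fst s v \<in> {1..K} \<and> snd s v \<le> n)
                       \<and> (\<forall>j\<in>{1..K}. vertices_of_type j n s \<noteq> {})"

lemma finite_vertices_of_type [simp]: "finite (vertices_of_type j n s)"
  by (simp add: vertices_of_type_def)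

lemma type_degree_count_le_type_count: "type_degree_count k j n s \<le> type_count j n s"
  unfolding type_degree_count_def type_count_def by (rule card_mono) auto

lemma type_degree_count_eq_sum:
  "real (type_degree_count k j n s) = (\<Sum>w=1..n. of_bool (fst s w = j \<and> out_degree n s w = k))"
proof -
  have "{v \<in> vertices_of_type j n s. out_degree n s v = k} = {1..n} \<inter> {w. fst s w = j \<and> out_degree n s w = k}"
    by (auto simp: vertices_of_type_def)
  then show ?thesis
    by (simp add: type_degree_count_def)
qed

lemma cmrt_step_eq:
  "cmrt_step p q K n s =
     vec_pmf K p \<bind> (\<lambda>i. vec_pmf K (q i) \<bind> (\<lambda>j.
       pmf_of_set (vertices_of_type j n s) \<bind> (\<lambda>v. return_pmf (attach n s i v))))"
  by (simp add: cmrt_step_def vertices_of_type_def attach_def)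

lemma N_deg_eq_sum_type_degree_count:
  assumes "wf_state K n s"
  shows "N_deg k n s = (\<Sum>j=1..K. type_degree_count k j n s)"
proof -
  have "{v \<in> {1..n}. out_degree n s v = k} = (\<Union>j\<in>{1..K}. {v \<in> vertices_of_type j n s. out_degree n s v = k})"
    using assms by (auto simp: wf_state_def vertices_of_type_def)
  moreover have "card (\<Union>j\<in>{1..K}. {v \<in> vertices_of_type j n s. out_degree n s v = k})
                   = (\<Sum>j=1..K. card {v \<in> vertices_of_type j n s. out_degree n s v = k})"
    by (rule card_UN_disjoint) (auto simp: vertices_of_type_def)
  ultimately show ?thesis
    by (simp add: N_deg_def type_degree_count_def)
qed

lemma fst_attach: "fst (attach n s i v) = (fst s)(Suc n := i)"
  by (simp add: attach_def)

lemma out_degree_attach: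
  assumes "w \<in> {1..n}"
  shows "out_degree (Suc n) (attach n s i v) w = out_degree n s w + of_bool (w = v)"
proof -
  have "{u \<in> {1..Suc n}. snd (attach n s i v) u = w}
          = {u \<in> {1..n}. snd s u = w} \<union> (if v = w then {Suc n} else {})"
    using assms by (auto simp: attach_def le_Suc_eq)
  then show ?thesis
    by (auto simp: out_degree_def)
qed

lemma out_degree_attach_new:
  assumes "wf_state K n s" and "v \<le> n"
  shows "out_degree (Suc n) (attach n s i v) (Suc n) = 0"
  using assms by (force simp: out_degree_def attach_def wf_state_def le_Suc_eq)

lemma type_count_attach:
  "type_count j (Suc n) (attach n s i v) = type_count j n s + of_bool (i = j)"
proof -
  have "vertices_of_type j (Suc n) (attach n s i v)
          = vertices_of_type j n s \<union> (if i = j then {Suc n} else {})"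
    by (auto simp: vertices_of_type_def attach_def le_Suc_eq)
  then show ?thesis
    by (auto simp: type_count_def vertices_of_type_def)
qed

lemma type_degree_count_attach:
  assumes "wf_state K n s" and v: "v \<in> {1..n}"
  shows "real (type_degree_count k j (Suc n) (attach n s i v))
           = real (type_degree_count k j n s) + of_bool (i = j \<and> k = 0)
             + of_bool (fst s v = j) * (of_bool (out_degree n s v + 1 = k) - of_bool (out_degree n s v = k))"
proof -
  let ?s' = "attach n s i v"
  let ?jump = "(of_bool (fst s v = j) * (of_bool (out_degree n s v + 1 = k) - of_bool (out_degree n s v = k)) :: real)"
  have jump: "(of_bool (fst s w = j \<and> out_degree n s w + of_bool (w = v) = k) :: real)
          = of_bool (fst s w = j \<and> out_degree n s w = k) + of_bool (w = v) * ?jump" for w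
    by auto
  have "(\<Sum>w=1..n. of_bool (fst ?s' w = j \<and> out_degree (Suc n) ?s' w = k))
          = (\<Sum>w=1..n. (of_bool (fst s w = j \<and> out_degree n s w + of_bool (w = v) = k) :: real))"
    by (intro sum.cong refl) (simp add: out_degree_attach fst_attach)
  also have "\<dots> = real (type_degree_count k j n s) + ?jump"
    using v by (simp only: jump sum.distrib type_degree_count_eq_sum) simp
  finally show ?thesis
    using assms by (simp add: type_degree_count_eq_sum[of k j "Suc n"] sum.cl_ivl_Suc out_degree_attach_new fst_attach)
qed

lemma wf_state_attach:
  assumes "wf_state K n s" and "i \<in> {1..K}" and "v \<in> {1..n}"
  shows "wf_state K (Suc n) (attach n s i v)"
proof -
  have "vertices_of_type j n s \<subseteq> vertices_of_type j (Suc n) (attach n s i v)" for j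
    by (auto simp: vertices_of_type_def attach_def)
  then show ?thesis
    using assms by (fastforce simp: wf_state_def attach_def le_Suc_eq)
qed

lemma recursive_trees_le:
  assumes "f \<in> recursive_trees K"
  shows "f m \<le> K"
proof (cases "m \<in> {2..K}")
  case True
  then have "f m < m"
    using assms by (auto simp: recursive_trees_def)
  with True show ?thesis
    by simp
qed (use assms in \<open>auto simp: recursive_trees_def\<close>)

lemma finite_recursive_trees: "finite (recursive_trees K)"
proof (rule finite_subset)
  show "recursive_trees K \<subseteq> {f. \<forall>m. (m \<in> {2..K} \<longrightarrow> f m \<in> {0..K}) \<and> (m \<notin> {2..K} \<longrightarrow> f m = 0)}"
    using recursive_trees_le by (auto simp: recursive_trees_def)
  show "finite {f. \<forall>m. (m \<in> {2..K} \<longrightarrow> f m \<in> {0..K}) \<and> (m \<notin> {2..K} \<longrightarrow> f m = (0::nat))}"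
    by (rule finite_set_of_finite_funs) auto
qed

lemma recursive_trees_nonempty: "recursive_trees K \<noteq> {}"
proof -
  have "(\<lambda>m. if m \<in> {2..K} then 1 else 0) \<in> recursive_trees K"
    by (auto simp: recursive_trees_def)
  then show ?thesis
    by blast
qed

lemma set_pmf_cmrt_init:
  "set_pmf (cmrt_init K) = (\<lambda>(\<sigma>, f). (\<lambda>v. if v \<in> {1..K} then \<sigma> v else 0, f))
                              ` ({\<sigma>. \<sigma> permutes {1..K}} \<times> recursive_trees K)"
proof -
  have "{\<sigma>. \<sigma> permutes {1..K}} \<noteq> {}"
    using permutes_id by blast
  then show ?thesis
    by (auto simp: cmrt_init_def finite_permutations finite_recursive_trees recursive_trees_nonempty)
qed

lemma finite_set_pmf_cmrt_init: "finite (set_pmf (cmrt_init K))"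
  by (simp add: set_pmf_cmrt_init finite_permutations finite_recursive_trees)

lemma wf_state_init:
  assumes "s \<in> set_pmf (cmrt_init K)"
  shows "wf_state K K s"
proof -
  obtain \<sigma> f where \<sigma>: "\<sigma> permutes {1..K}" and f: "f \<in> recursive_trees K"
    and s: "s = (\<lambda>v. if v \<in> {1..K} then \<sigma> v else 0, f)"
    using assms by (auto simp: set_pmf_cmrt_init)
  have "inv \<sigma> j \<in> vertices_of_type j K s" if "j \<in> {1..K}" for j
    using that permutes_in_image[OF permutes_inv[OF \<sigma>]] permutes_inverses(1)[OF \<sigma>]
    by (auto simp: vertices_of_type_def s)
  then show ?thesis
    using permutes_in_image[OF \<sigma>] recursive_trees_le[OF f] by (fastforce simp: wf_state_def s)
qed

lemma cmrt_eq_init: "n \<le> K \<Longrightarrow> cmrt p q K n = cmrt_init K"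
  by (cases n) auto

lemma cmrt_Suc: "K \<le> n \<Longrightarrow> cmrt p q K (Suc n) = cmrt p q K n \<bind> cmrt_step p q K n"
  by simp

section \<open>The CMRT chain\<close>

locale cmrt_model =
  fixes K :: nat and p :: "nat \<Rightarrow> real" and q :: "nat \<Rightarrow> nat \<Rightarrow> real"
  assumes K_pos: "1 \<le> K"
    and p_prob: "prob_vector K p"
    and q_prob: "\<And>i. i \<in> {1..K} \<Longrightarrow> prob_vector K (q i)"
begin

abbreviation mean :: "nat \<Rightarrow> (cmrt_state \<Rightarrow> real) \<Rightarrow> real" where
  "mean n f \<equiv> measure_pmf.expectation (cmrt p q K n) f"

definition inflow :: "nat \<Rightarrow> real" where
  "inflow j = (\<Sum>i=1..K. p i * q i j)"

lemma p_nonneg: "i \<in> {1..K} \<Longrightarrow> 0 \<le> p i"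
  using p_prob by (simp add: prob_vector_def)

lemma p_le_one: "i \<in> {1..K} \<Longrightarrow> p i \<le> 1"
  using member_le_sum[of i "{1..K}" p] p_prob by (simp add: prob_vector_def)

lemma inflow_nonneg: "j \<in> {1..K} \<Longrightarrow> 0 \<le> inflow j"
  using p_nonneg q_prob by (auto simp: inflow_def prob_vector_def intro!: sum_nonneg)

lemma sum_p_mult_indicator:
  assumes "j \<in> {1..K}"
  shows "(\<Sum>i=1..K. p i * (c + of_bool (i = j) * d)) = c + p j * d"
proof -
  have "(\<Sum>i=1..K. p i * c) = c"
    using p_prob by (simp add: prob_vector_def flip: sum_distrib_right)
  moreover have "(\<Sum>i=1..K. p i * (of_bool (i = j) * d)) = p j * d"
    using assms by (simp add: of_bool_def if_distrib[of "\<lambda>x. x * d"] if_distrib[of "(*) _"] cong: if_cong)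
  ultimately show ?thesis
    by (simp add: distrib_left sum.distrib)
qed

lemma set_pmf_cmrt_step:
  assumes "wf_state K n s"
  shows "set_pmf (cmrt_step p q K n s) \<subseteq> {attach n s i v |i v. i \<in> {1..K} \<and> v \<in> {1..n}}"
proof
  fix x assume "x \<in> set_pmf (cmrt_step p q K n s)"
  then obtain i j v where i: "i \<in> set_pmf (vec_pmf K p)" and j: "j \<in> set_pmf (vec_pmf K (q i))"
    and v: "v \<in> set_pmf (pmf_of_set (vertices_of_type j n s))" and x: "x = attach n s i v"
    by (auto simp: cmrt_step_eq)
  have "i \<in> {1..K}"
    using i set_vec_pmf[OF p_prob] by blast
  then have "j \<in> {1..K}"
    using j set_vec_pmf[OF q_prob] by blast
  then have "v \<in> vertices_of_type j n s"
    using v assms by (simp add: wf_state_def)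
  then show "x \<in> {attach n s i v |i v. i \<in> {1..K} \<and> v \<in> {1..n}}"
    using x \<open>i \<in> {1..K}\<close> by (auto simp: vertices_of_type_def)
qed

lemma wf_state_cmrt: "K \<le> n \<Longrightarrow> s \<in> set_pmf (cmrt p q K n) \<Longrightarrow> wf_state K n s"
proof (induction n arbitrary: s rule: dec_induct)
  case base
  then show ?case
    using wf_state_init by (simp add: cmrt_eq_init)
next
  case (step n)
  then obtain s0 where "wf_state K n s0" and "s \<in> set_pmf (cmrt_step p q K n s0)"
    by (auto simp: cmrt_Suc)
  then show ?case
    using set_pmf_cmrt_step wf_state_attach by blast
qed

lemma finite_set_pmf_cmrt: "finite (set_pmf (cmrt p q K n))"
proof (induction n)
  case (Suc n)
  show ?case
  proof (cases "Suc n \<le> K")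
    case False
    have "finite (set_pmf (cmrt_step p q K n s))" if "s \<in> set_pmf (cmrt p q K n)" for s
    proof (rule finite_subset)
      show "set_pmf (cmrt_step p q K n s) \<subseteq> {attach n s i v |i v. i \<in> {1..K} \<and> v \<in> {1..n}}"
        using False that by (intro set_pmf_cmrt_step wf_state_cmrt) auto
    qed (rule finite_image_set2; simp)
    then show ?thesis
      using Suc.IH False by (simp add: cmrt_Suc)
  qed (simp add: cmrt_eq_init finite_set_pmf_cmrt_init)
qed (simp add: finite_set_pmf_cmrt_init)

lemma expectation_cmrt_step:
  assumes "wf_state K n s"
  shows "measure_pmf.expectation (cmrt_step p q K n s) F
           = (\<Sum>i=1..K. p i * (\<Sum>j=1..K. q i j *
                ((\<Sum>v\<in>vertices_of_type j n s. F (attach n s i v)) / card (vertices_of_type j n s))))"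
proof -
  let ?parent = "\<lambda>i j. pmf_of_set (vertices_of_type j n s) \<bind> (\<lambda>v. return_pmf (attach n s i v))"
  have nonempty: "vertices_of_type j n s \<noteq> {}" if "j \<in> {1..K}" for j
    using assms that by (simp add: wf_state_def)
  have finite_parent: "finite (set_pmf (?parent i j))" if "j \<in> {1..K}" for i j
    by (simp add: nonempty[OF that])
  have finite_type: "finite (set_pmf (vec_pmf K (q i) \<bind> ?parent i))" if "i \<in> {1..K}" for i
    unfolding set_bind_pmf[of "vec_pmf K (q i)"]
    using set_vec_pmf[OF q_prob[OF that]] finite_parent by (intro finite_UN_I) (auto intro: finite_subset)
  have "measure_pmf.expectation (vec_pmf K (q i) \<bind> ?parent i) F
          = (\<Sum>j=1..K. q i j * ((\<Sum>v\<in>vertices_of_type j n s. F (attach n s i v)) / card (vertices_of_type j n s)))"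
    if "i \<in> {1..K}" for i
    by (subst expectation_vec_pmf_bind[OF q_prob[OF that] finite_parent])
       (auto simp: expectation_pmf_of_set_bind_return nonempty intro: sum.cong)
  then show ?thesis
    unfolding cmrt_step_eq by (subst expectation_vec_pmf_bind[OF p_prob finite_type]) auto
qed

lemma expectation_cmrt_step_split:
  assumes wf: "wf_state K n s" and j: "j \<in> {1..K}"
    and F: "\<And>i v. i \<in> {1..K} \<Longrightarrow> v \<in> {1..n} \<Longrightarrow> F (attach n s i v) = f i + of_bool (fst s v = j) * g v"
  shows "measure_pmf.expectation (cmrt_step p q K n s) F
           = (\<Sum>i=1..K. p i * f i)
             + inflow j * (\<Sum>v\<in>vertices_of_type j n s. g v) / card (vertices_of_type j n s)"
proof -
  define A where "A = (\<Sum>v\<in>vertices_of_type j n s. g v) / card (vertices_of_type j n s)"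
  have "(\<Sum>v\<in>vertices_of_type j' n s. F (attach n s i v)) / card (vertices_of_type j' n s)
          = f i + of_bool (j' = j) * A"
    if "i \<in> {1..K}" and "j' \<in> {1..K}" for i j'
  proof -
    have "(\<Sum>v\<in>vertices_of_type j' n s. F (attach n s i v))
            = (\<Sum>v\<in>vertices_of_type j' n s. f i + of_bool (j' = j) * g v)"
      using that by (intro sum.cong refl) (auto simp: F vertices_of_type_def)
    moreover have "vertices_of_type j' n s \<noteq> {}"
      using wf that by (simp add: wf_state_def)
    ultimately show ?thesis
      by (simp add: A_def sum.distrib field_simps)
  qed
  then have "measure_pmf.expectation (cmrt_step p q K n s) F
               = (\<Sum>i=1..K. p i * (\<Sum>j'=1..K. q i j' * (f i + of_bool (j' = j) * A)))"
    by (simp add: expectation_cmrt_step[OF wf])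
  also have "\<dots> = (\<Sum>i=1..K. p i * (f i + q i j * A))"
  proof (intro sum.cong refl arg_cong[where f="(*) (p _)"])
    fix i assume "i \<in> {1..K}"
    then have "(\<Sum>j'=1..K. q i j' * f i) = f i"
      using q_prob by (simp add: prob_vector_def flip: sum_distrib_right)
    moreover have "(\<Sum>j'=1..K. q i j' * (of_bool (j' = j) * A)) = q i j * A"
      using j by (simp add: of_bool_def if_distrib[of "\<lambda>x. x * A"] if_distrib[of "(*) _"] cong: if_cong)
    ultimately show "(\<Sum>j'=1..K. q i j' * (f i + of_bool (j' = j) * A)) = f i + q i j * A"
      by (simp add: distrib_left sum.distrib)
  qed
  also have "\<dots> = (\<Sum>i=1..K. p i * f i) + inflow j * A"
    by (simp add: inflow_def distrib_left sum.distrib sum_distrib_right mult.assoc)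
  finally show ?thesis
    by (simp add: A_def)
qed

lemma integrable_cmrt [simp]: "integrable (measure_pmf (cmrt p q K n)) (f :: cmrt_state \<Rightarrow> real)"
  by (rule integrable_measure_pmf_finite[OF finite_set_pmf_cmrt])

lemma mean_abs_sublinear_of_step_drift:
  fixes Z h :: "nat \<Rightarrow> cmrt_state \<Rightarrow> real"
  assumes increment: "\<And>n s i v. K \<le> n \<Longrightarrow> wf_state K n s \<Longrightarrow> i \<in> {1..K} \<Longrightarrow> v \<in> {1..n} \<Longrightarrow>
                       \<bar>Z (Suc n) (attach n s i v) - Z n s\<bar> \<le> B"
    and drift: "\<And>n s. K \<le> n \<Longrightarrow> wf_state K n s \<Longrightarrow>
                  Z n s * (measure_pmf.expectation (cmrt_step p q K n s) (Z (Suc n)) - Z n s) \<le> h n s"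
    and "(\<lambda>n. mean n (h n) / n) \<longlonglongrightarrow> 0"
  shows "(\<lambda>n. mean n (\<lambda>s. \<bar>Z n s\<bar>) / n) \<longlonglongrightarrow> 0"
proof (rule mean_abs_sublinear_of_drift[where N = K])
  fix n s x assume n: "K \<le> n" and s: "s \<in> set_pmf (cmrt p q K n)" and x: "x \<in> set_pmf (cmrt_step p q K n s)"
  then show "\<bar>Z (Suc n) x - Z n s\<bar> \<le> B"
    using set_pmf_cmrt_step[OF wf_state_cmrt[OF n s]] increment[OF n wf_state_cmrt[OF n s]] by blast
qed (use assms wf_state_cmrt finite_set_pmf_cmrt cmrt_Suc in auto)

lemma type_count_mean_abs_sublinear:
  assumes j: "j \<in> {1..K}"
  shows "(\<lambda>n. mean n (\<lambda>s. \<bar>real (type_count j n s) - p j * n\<bar>) / n) \<longlonglongrightarrow> 0"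
proof (rule mean_abs_sublinear_of_step_drift[where B = 1 and h = "\<lambda>_ _. 0"])
  fix n s i v
  show "\<bar>real (type_count j (Suc n) (attach n s i v)) - p j * real (Suc n)
          - (real (type_count j n s) - p j * real n)\<bar> \<le> 1"
    using p_nonneg[OF j] p_le_one[OF j] by (simp add: type_count_attach algebra_simps)
next
  fix n s assume wf: "wf_state K n s"
  let ?Y = "real (type_count j n s) - p j * n"
  have "measure_pmf.expectation (cmrt_step p q K n s) (\<lambda>s'. real (type_count j (Suc n) s') - p j * real (Suc n))
          = (\<Sum>i=1..K. p i * ((?Y - p j) + of_bool (i = j) * 1))
            + inflow j * (\<Sum>v\<in>vertices_of_type j n s. 0) / card (vertices_of_type j n s)"
    by (rule expectation_cmrt_step_split[OF wf j]) (simp add: type_count_attach algebra_simps)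
  also have "\<dots> = ?Y"
    by (simp only: sum_p_mult_indicator[OF j]) simp
  finally show "?Y * (measure_pmf.expectation (cmrt_step p q K n s)
                  (\<lambda>s'. real (type_count j (Suc n) s') - p j * real (Suc n)) - ?Y) \<le> 0"
    by simp
qed simp

definition deg_limit :: "nat \<Rightarrow> nat \<Rightarrow> real" where
  "deg_limit j k = 1 / (1 + cmrt_r p q K j) * (cmrt_r p q K j / (1 + cmrt_r p q K j)) ^ k"

definition discrepancy :: "nat \<Rightarrow> nat \<Rightarrow> nat \<Rightarrow> cmrt_state \<Rightarrow> real" where
  "discrepancy k j n s = real (type_degree_count k j n s) - deg_limit j k * real (type_count j n s)"

lemma cmrt_r_eq: "cmrt_r p q K j = inflow j / p j"
  by (simp add: cmrt_r_def inflow_def)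

lemma deg_limit_nonneg: "j \<in> {1..K} \<Longrightarrow> 0 \<le> deg_limit j k"
  using inflow_nonneg p_nonneg by (simp add: deg_limit_def cmrt_r_eq)

lemma deg_limit_balance:
  assumes "0 < p j" and "j \<in> {1..K}"
  shows "(of_bool (k = 0) - deg_limit j k) * p j
           = inflow j * (deg_limit j k - (if k = 0 then 0 else deg_limit j (k - 1)))"
proof -
  define r where "r = cmrt_r p q K j"
  have "0 \<le> r" and inflow: "inflow j = r * p j"
    using assms inflow_nonneg[of j] by (simp_all add: r_def cmrt_r_eq)
  show ?thesis
  proof (cases k)
    case 0
    then show ?thesis
      using \<open>0 \<le> r\<close> by (simp add: inflow deg_limit_def r_def[symmetric] field_simps)
  next
    case (Suc k')
    have "deg_limit j k = deg_limit j k' * (r / (1 + r))"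
      by (simp add: Suc deg_limit_def r_def power_Suc2)
    then have "(1 + r) * deg_limit j k = r * deg_limit j k'"
      using \<open>0 \<le> r\<close> by simp
    from arg_cong[OF this, of "\<lambda>x. p j * x"] show ?thesis
      by (simp add: Suc inflow algebra_simps)
  qed
qed

lemma abs_discrepancy_le:
  assumes "j \<in> {1..K}"
  shows "\<bar>discrepancy k j n s\<bar> \<le> (1 + deg_limit j k) * type_count j n s"
proof -
  have "0 \<le> deg_limit j k * type_count j n s"
    using assms by (simp add: deg_limit_nonneg)
  moreover have "real (type_degree_count k j n s) \<le> type_count j n s"
    using type_degree_count_le_type_count[of k j n s] by simp
  ultimately show ?thesis
    by (simp add: discrepancy_def abs_le_iff algebra_simps)
qed

lemma discrepancy_attach:
  assumes "wf_state K n s" and "v \<in> {1..n}"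
  shows "discrepancy k j (Suc n) (attach n s i v)
           = discrepancy k j n s + of_bool (i = j) * (of_bool (k = 0) - deg_limit j k)
             + of_bool (fst s v = j) * (of_bool (out_degree n s v + 1 = k) - of_bool (out_degree n s v = k))"
  using type_degree_count_attach[OF assms]
  by (simp add: discrepancy_def type_count_attach algebra_simps)

lemma discrepancy_increment:
  assumes "wf_state K n s" and "j \<in> {1..K}" and "v \<in> {1..n}"
  shows "\<bar>discrepancy k j (Suc n) (attach n s i v) - discrepancy k j n s\<bar> \<le> 2 + deg_limit j k"
  using deg_limit_nonneg[OF assms(2)] by (auto simp: discrepancy_attach[OF assms(1,3)] of_bool_def abs_le_iff)

lemma sum_of_bool_out_degree:
  "(\<Sum>v\<in>vertices_of_type j n s. of_bool (out_degree n s v = k)) = real (type_degree_count k j n s)"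
  by (simp add: type_degree_count_def Int_def)

lemma expectation_discrepancy_step:
  assumes wf: "wf_state K n s" and j: "j \<in> {1..K}" and pj: "0 < p j"
  shows "measure_pmf.expectation (cmrt_step p q K n s) (discrepancy k j (Suc n)) - discrepancy k j n s
           = inflow j * ((if k = 0 then 0 else discrepancy (k - 1) j n s) - discrepancy k j n s)
             / type_count j n s"
proof -
  define E where "E = measure_pmf.expectation (cmrt_step p q K n s) (discrepancy k j (Suc n))"
  let ?V = "vertices_of_type j n s"
  have "E = (\<Sum>i=1..K. p i * (discrepancy k j n s + of_bool (i = j) * (of_bool (k = 0) - deg_limit j k)))
            + inflow j * (\<Sum>v\<in>?V. of_bool (out_degree n s v + 1 = k) - of_bool (out_degree n s v = k)) / card ?V"
    unfolding E_def by (rule expectation_cmrt_step_split[OF wf j]) (simp add: discrepancy_attach[OF wf])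
  also have "(\<Sum>v\<in>?V. of_bool (out_degree n s v + 1 = k) - of_bool (out_degree n s v = k))
               = (if k = 0 then 0 else real (type_degree_count (k - 1) j n s)) - type_degree_count k j n s"
    by (cases k) (simp_all add: sum_subtractf sum_negf sum_of_bool_out_degree)
  also have "(\<Sum>i=1..K. p i * (discrepancy k j n s + of_bool (i = j) * (of_bool (k = 0) - deg_limit j k)))
               = discrepancy k j n s + inflow j * (deg_limit j k - (if k = 0 then 0 else deg_limit j (k - 1)))"
    unfolding sum_p_mult_indicator[OF j] using deg_limit_balance[OF pj j, of k] by (simp add: mult.commute)
  finally have "E = discrepancy k j n s + inflow j * (deg_limit j k - (if k = 0 then 0 else deg_limit j (k - 1)))
      + inflow j * ((if k = 0 then 0 else real (type_degree_count (k - 1) j n s)) - type_degree_count k j n s)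
        / card ?V" .
  moreover have "real (card ?V) \<noteq> 0"
    using wf j by (simp add: wf_state_def)
  ultimately show ?thesis
    unfolding E_def[symmetric] by (cases k) (simp_all add: discrepancy_def type_count_def field_simps)
qed

lemma discrepancy_drift_le:
  assumes wf: "wf_state K n s" and j: "j \<in> {1..K}" and pj: "0 < p j"
  shows "discrepancy k j n s * (measure_pmf.expectation (cmrt_step p q K n s) (discrepancy k j (Suc n))
            - discrepancy k j n s)
           \<le> inflow j * (1 + deg_limit j k) * \<bar>if k = 0 then 0 else discrepancy (k - 1) j n s\<bar>"
  unfolding expectation_discrepancy_step[OF assms]
proof (rule relaxation_drift_le[OF abs_discrepancy_le[OF j] _ inflow_nonneg[OF j]])
  show "0 < real (type_count j n s)"
    using wf j by (simp add: type_count_def wf_state_def card_gt_0_iff)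
qed

lemma discrepancy_mean_abs_sublinear:
  assumes j: "j \<in> {1..K}" and pj: "0 < p j"
  shows "(\<lambda>n. mean n (\<lambda>s. \<bar>discrepancy k j n s\<bar>) / n) \<longlonglongrightarrow> 0"
proof (induction k)
  case 0
  show ?case
    using discrepancy_increment discrepancy_drift_le[OF _ j pj, of _ _ 0] j
    by (intro mean_abs_sublinear_of_step_drift[where B = "2 + deg_limit j 0" and h = "\<lambda>_ _. 0"]) auto
next
  case (Suc k)
  let ?c = "inflow j * (1 + deg_limit j (Suc k))"
  have "(\<lambda>n. ?c * (mean n (\<lambda>s. \<bar>discrepancy k j n s\<bar>) / n)) \<longlonglongrightarrow> 0"
    using tendsto_mult_right_zero[OF Suc.IH] by simp
  then show ?case
    using discrepancy_increment discrepancy_drift_le[OF _ j pj, of _ _ "Suc k"] j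
    by (intro mean_abs_sublinear_of_step_drift[where B = "2 + deg_limit j (Suc k)"
          and h = "\<lambda>n s. ?c * \<bar>discrepancy k j n s\<bar>"]) auto
qed

lemma mean_sublinear_mono:
  fixes f g :: "nat \<Rightarrow> cmrt_state \<Rightarrow> real"
  assumes "\<And>n s. 0 \<le> f n s" and "\<And>n s. f n s \<le> g n s" and "(\<lambda>n. mean n (g n) / n) \<longlonglongrightarrow> 0"
  shows "(\<lambda>n. mean n (f n) / n) \<longlonglongrightarrow> 0"
proof (rule tendsto_sandwich[OF _ _ tendsto_const assms(3)])
  show "\<forall>\<^sub>F n in sequentially. 0 \<le> mean n (f n) / n"
    using assms(1) by (simp add: divide_nonneg_nonneg)
  show "\<forall>\<^sub>F n in sequentially. mean n (f n) / n \<le> mean n (g n) / n"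
    using assms(2) by (intro always_eventually allI divide_right_mono integral_mono) auto
qed

lemma type_degree_count_mean_abs_sublinear:
  assumes j: "j \<in> {1..K}"
  shows "(\<lambda>n. mean n (\<lambda>s. \<bar>real (type_degree_count k j n s) - (if p j = 0 then 0 else p j * deg_limit j k) * n\<bar>)
              / n) \<longlonglongrightarrow> 0"
proof (cases "p j = 0")
  case True
  have "real (type_degree_count k j n s) \<le> real (type_count j n s)" for n s
    using type_degree_count_le_type_count by simp
  then show ?thesis
    using True by (intro mean_sublinear_mono[OF _ _ type_count_mean_abs_sublinear[OF j]]) simp_all
next
  case False
  then have pj: "0 < p j"
    using p_nonneg[OF j] by simp
  let ?Y = "\<lambda>n s. \<bar>real (type_count j n s) - p j * n\<bar>"
  have "(\<lambda>n. mean n (\<lambda>s. \<bar>discrepancy k j n s\<bar>) / n + deg_limit j k * (mean n (?Y n) / n)) \<longlonglongrightarrow> 0 + deg_limit j k * 0"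
    by (intro tendsto_add tendsto_mult tendsto_const discrepancy_mean_abs_sublinear[OF j pj]
        type_count_mean_abs_sublinear[OF j])
  then have lim: "(\<lambda>n. mean n (\<lambda>s. \<bar>discrepancy k j n s\<bar> + deg_limit j k * ?Y n s) / n) \<longlonglongrightarrow> 0"
    by (simp add: add_divide_distrib)
  have "\<bar>real (type_degree_count k j n s) - p j * deg_limit j k * n\<bar>
                   \<le> \<bar>discrepancy k j n s\<bar> + deg_limit j k * ?Y n s" for n s
  proof -
    have "real (type_degree_count k j n s) - p j * deg_limit j k * n
            = discrepancy k j n s + deg_limit j k * (real (type_count j n s) - p j * n)"
      by (simp add: discrepancy_def algebra_simps)
    then show ?thesis
      using deg_limit_nonneg[OF j, of k] by (simp add: abs_mult abs_triangle_ineq[THEN order_trans])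
  qed
  then show ?thesis
    using False by (intro mean_sublinear_mono[OF _ _ lim]) simp_all
qed

lemma cmrt_c_eq: "cmrt_c p q K k = (\<Sum>j=1..K. if p j = 0 then 0 else p j * deg_limit j k)"
  unfolding cmrt_c_def deg_limit_def by (intro sum.cong refl) simp

lemma degree_frequency_mean_abs_tendsto:
  "(\<lambda>n. mean n (\<lambda>s. \<bar>real (N_deg k n s) / n - cmrt_c p q K k\<bar>)) \<longlonglongrightarrow> 0"
proof -
  define c where "c j = (if p j = 0 then 0 else p j * deg_limit j k)" for j
  define err where "err j n s = \<bar>real (type_degree_count k j n s) - c j * n\<bar>" for j n s
  have "(\<lambda>n. \<Sum>j=1..K. mean n (err j n) / n) \<longlonglongrightarrow> (\<Sum>j=1..K. 0)"
    unfolding err_def c_def by (intro tendsto_sum type_degree_count_mean_abs_sublinear)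
  then have lim: "(\<lambda>n. (\<Sum>j=1..K. mean n (err j n)) / n) \<longlonglongrightarrow> 0"
    by (simp add: sum_divide_distrib)
  have "mean n (\<lambda>s. \<bar>real (N_deg k n s) / n - cmrt_c p q K k\<bar>) \<le> (\<Sum>j=1..K. mean n (err j n)) / n"
    if "K \<le> n" for n
  proof -
    have "\<bar>real (N_deg k n s) / n - cmrt_c p q K k\<bar> \<le> (\<Sum>j=1..K. err j n s) / n"
      if "s \<in> set_pmf (cmrt p q K n)" for s
    proof -
      have n: "real n > 0"
        using K_pos \<open>K \<le> n\<close> by simp
      have "real (N_deg k n s) / n - cmrt_c p q K k = (real (N_deg k n s) - cmrt_c p q K k * n) / n"
        using n by (simp add: field_simps)
      also have "\<dots> = (\<Sum>j=1..K. real (type_degree_count k j n s) - c j * n) / n"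
        using N_deg_eq_sum_type_degree_count[OF wf_state_cmrt[OF \<open>K \<le> n\<close> that]]
        by (simp add: cmrt_c_eq c_def sum_subtractf sum_distrib_right)
      finally have "\<bar>real (N_deg k n s) / n - cmrt_c p q K k\<bar>
                      = \<bar>\<Sum>j=1..K. real (type_degree_count k j n s) - c j * n\<bar> / n"
        by simp
      also have "\<dots> \<le> (\<Sum>j=1..K. err j n s) / n"
        unfolding err_def using n by (intro divide_right_mono sum_abs) auto
      finally show ?thesis .
    qed
    then have "mean n (\<lambda>s. \<bar>real (N_deg k n s) / n - cmrt_c p q K k\<bar>) \<le> mean n (\<lambda>s. (\<Sum>j=1..K. err j n s) / n)"
      by (intro integral_mono_AE AE_pmfI) auto
    then show ?thesis
      by simp
  qed
  then show ?thesis
    by (intro tendsto_sandwich[OF _ _ tendsto_const lim]) (auto simp: eventually_sequentially)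
qed

end

theorem theorem3p5:
  fixes K k :: nat and p :: "nat \<Rightarrow> real" and q :: "nat \<Rightarrow> nat \<Rightarrow> real"
  assumes "K \<ge> 2"
    and "\<forall>i\<in>{1..K}. p i \<ge> 0"
    and "(\<Sum>i=1..K. p i) = 1"
    and "\<forall>i\<in>{1..K}. p i \<le> p 1"
    and "p 1 > 0"
    and "\<forall>i\<in>{1..K}. \<forall>j\<in>{1..K}. q i j \<ge> 0"
    and "\<forall>i\<in>{1..K}. (\<Sum>j=1..K. q i j) = 1"
  shows "\<forall>\<epsilon>>0. ((\<lambda>n. measure_pmf.prob (cmrt p q K n)
            {s. \<bar>real (N_deg k n s) / real n - cmrt_c p q K k\<bar> > \<epsilon>}) \<longlongrightarrow> 0) at_top"
proof -
  interpret cmrt_model K p q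
    using assms(1-3,6,7) by unfold_locales (auto simp: prob_vector_def)
  show ?thesis
    using prob_abs_gt_tendsto_zero[OF integrable_cmrt degree_frequency_mean_abs_tendsto] by auto
qed

end
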